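(* Let $n\ge1$ and $u\in\mathfrak{S}_n$. The Hopf algebra morphism $\mathcal{D}\colon\mathfrak{S}Sym\to QSym$, $\mathcal{F}_u\mapsto F_{\mathrm{Des}(u)}$, satisfies $$\mathcal{D}(\mathcal{M}_u)=\begin{cases}M_{\mathrm{GDes}(u)}&\text{if }u\text{ is closed},\\ 0&\text{otherwise.}\end{cases}$$
   Context: Permutations in one-line notation. $\mathrm{Des}(u)=\{p\in[n-1]:u_p>u_{p+1}\}$, $\mathrm{GDes}(u)=\{p\in[n-1]:u_i>u_j\text{ for all }i\le p<j\}$. For $J=\{p_1<\cdots<p_k\}\subseteq[n-1]$, $\zeta_J=(n{-}p_1{+}1,\ldots,n,\ n{-}p_2{+}1,\ldots,n{-}p_1,\ldots,1,\ldots,n{-}p_k)$, $\zeta_\emptyset=1_n$. A permutation $u\in\mathfrak{S}_n$ is closed if $u=\zeta_J$ for some $J\subseteq[n-1]$ (equivalently $\mathrm{Des}(u)=\mathrm{GDes}(u)$). $\mathfrak{S}Sym$ has basis $\{\mathcal{F}_u\}$; with the weak order ($u\le v$ iff $\mathrm{Inv}(u)\subseteq\mathrm{Inv}(v)$, $\mathrm{Inv}(u)=\{(i,j):i<j,u_i>u_j\}$) and its Möbius function $\mu$, $\mathcal{M}_u=\sum_{v\ge u}\mu(u,v)\mathcal{F}_v$. $QSym$ is the algebra of quasi-symmetric functions in commuting variables $x_1,x_2,\ldots$; for $J=\{j_1<\cdots<j_{k-1}\}\subseteq[n-1]$ with associated composition $\alpha=(j_1,j_2-j_1,\ldots,n-j_{k-1})$,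 the monomial quasi-symmetric function is $M_J=M_{J,n}=\sum_{i_1<\cdots<i_k}x_{i_1}^{\alpha_1}\cdots x_{i_k}^{\alpha_k}$ and the fundamental one is $F_J=\sum_{K\supseteq J,\,K\subseteq[n-1]}M_K$. The map $\mathcal{D}$ is (known to be) a morphism of Hopf algebras. *)

theory Defs
  imports Main
begin

section \<open>Permutations in one-line notation (lists, positions 1-indexed)\<close>

definition perms :: "nat \<Rightarrow> nat list set" where
  "perms n = {u. length u = n \<and> distinct u \<and> set u = {1..n}}"

definition ent :: "nat list \<Rightarrow> nat \<Rightarrow> nat" where
  "ent u p = u ! (p - 1)"

definition Des :: "nat list \<Rightarrow> nat set" where
  "Des u = {p \<in> {1..<length u}. ent u p > ent u (p + 1)}"

definition GDes :: "nat list \<Rightarrow> nat set" where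
  "GDes u = {p \<in> {1..<length u}.
      \<forall>i j. 1 \<le> i \<and> i \<le> p \<and> p < j \<and> j \<le> length u \<longrightarrow> ent u i > ent u j}"

definition Inv :: "nat list \<Rightarrow> (nat \<times> nat) set" where
  "Inv u = {(i, j). 1 \<le> i \<and> i < j \<and> j \<le> length u \<and> ent u i > ent u j}"

definition weak_le :: "nat list \<Rightarrow> nat list \<Rightarrow> bool" where
  "weak_le u v \<longleftrightarrow> Inv u \<subseteq> Inv v"

lemma finite_Inv: "finite (Inv u)"
proof -
  have "Inv u \<subseteq> {0..length u} \<times> {0..length u}" by (auto simp: Inv_def)
  then show ?thesis by (rule finite_subset) simp
qed

definition pts :: "nat set \<Rightarrow> nat \<Rightarrow> nat list" where
  "pts J n = sorted_list_of_set ({0} \<union> J \<union> {n})"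

text \<open>zeta_J: blocks (n-p_1+1..n), (n-p_2+1..n-p_1), ..., (1..n-p_k).\<close>
definition zeta :: "nat set \<Rightarrow> nat \<Rightarrow> nat list" where
  "zeta J n = concat (map (\<lambda>i. [n - pts J n ! (i + 1) + 1 ..< n - pts J n ! i + 1])
                          [0..<length (pts J n) - 1])"

definition closed :: "nat \<Rightarrow> nat list \<Rightarrow> bool" where
  "closed n u \<longleftrightarrow> (\<exists>J. J \<subseteq> {1..<n} \<and> u = zeta J n)"

text \<open>mu(u,u) = 1, mu(u,v) = - sum_{u \<le> w < v} mu(u,w) for u < v, and 0 otherwise.
  (Strictness w < v is expressed as Inv w \<subset> Inv v.)\<close>
function mob :: "nat list \<Rightarrow> nat list \<Rightarrow> int" where
  "mob u v = (if u = v then 1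
              else if Inv u \<subset> Inv v then
                - (\<Sum>w \<in> {w \<in> perms (length v). Inv u \<subseteq> Inv w \<and> Inv w \<subset> Inv v}. mob u w)
              else 0)"
  by auto
termination
  by (relation "measure (\<lambda>(u, v). card (Inv v))")
     (auto intro: psubset_card_mono finite_Inv)

text \<open>A formal power series in commuting variables x_1, x_2, ... is represented by its
  coefficient function on exponent vectors e :: nat \<Rightarrow> nat (e i = exponent of x_i).\<close>

definition comp :: "nat set \<Rightarrow> nat \<Rightarrow> nat list" where
  "comp J n = map (\<lambda>(a, b). b - a) (zip (pts J n) (tl (pts J n)))"

definition Mq :: "nat set \<Rightarrow> nat \<Rightarrow> (nat \<Rightarrow> nat) \<Rightarrow> int" where
  "Mq J n e = (if \<exists>is. sorted_wrt (<) is \<and> length is = length (comp J n) \<and> set is \<subseteq> {1..}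
                      \<and> (\<forall>k < length is. e (is ! k) = comp J n ! k)
                      \<and> (\<forall>x. x \<notin> set is \<longrightarrow> e x = 0)
               then 1 else 0)"

definition Fq :: "nat set \<Rightarrow> nat \<Rightarrow> (nat \<Rightarrow> nat) \<Rightarrow> int" where
  "Fq J n e = (\<Sum>K \<in> {K. K \<subseteq> {1..<n} \<and> J \<subseteq> K}. Mq K n e)"

text \<open>D(F_u) = F_{Des u}, extended linearly; M_u = sum_{v \<ge> u} mu(u,v) F_v.\<close>
definition D_M :: "nat \<Rightarrow> nat list \<Rightarrow> (nat \<Rightarrow> nat) \<Rightarrow> int" where
  "D_M n u = (\<lambda>e. \<Sum>v \<in> {v \<in> perms n. weak_le u v}. mob u v * Fq (Des v) n e)"

end

theory Submission
  imports Defs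
begin

(* Expanding F_{Des v} = sum of M_K over K containing Des v gives
   D(M_u) = sum over K of M_K * (sum of mu(u,v) over v >= u with Des v a subset of K).
   The permutations whose descents lie in K are exactly those below zeta_K in the weak
   order, because the inversions of zeta_K are the pairs of positions separated by K.
   Hence the inner sum runs over the interval [u, zeta_K] and equals 1 if u = zeta_K and
   0 otherwise.  Since GDes zeta_K = K, at most one K contributes, namely K = GDes u,
   and only when u is closed. *)

lemma sorted_wrt_hd_le_le_last:
  fixes q :: "'a :: order list"
  assumes "sorted_wrt (<) q" "x \<in> set q"
  shows "hd q \<le> x" "x \<le> last q"
  using assms by (induction q) (auto simp: less_imp_le intro: order.trans)

lemma nth_append_less_iff:
  fixes xs ys :: "'a :: linorder list"
  assumes "sorted_wrt (<) xs" "\<forall>x\<in>set xs. \<forall>y\<in>set ys. y < x"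
    and "i < j" "j < length xs + length ys"
  shows "(xs @ ys) ! j < (xs @ ys) ! i \<longleftrightarrow>
    i < length xs \<and> length xs \<le> j \<or>
    length xs \<le> i \<and> ys ! (j - length xs) < ys ! (i - length xs)"
proof -
  consider "j < length xs" | "i < length xs" "length xs \<le> j" | "length xs \<le> i"
    by linarith
  then show ?thesis
  proof cases
    case 1
    then show ?thesis using assms sorted_wrt_nth_less[OF assms(1), of i j]
      by (auto simp: nth_append)
  next
    case 2
    then show ?thesis using assms(2,4) by (auto simp: nth_append)
  next
    case 3
    then show ?thesis using assms(3) by (simp add: nth_append)
  qed
qed

(* The block form of zeta: for q = [p_0, ..., p_k] the positions p_i + 1 .. p_(i+1)
   carry the increasing values N - p_(i+1) + 1 .. N - p_i. *)
fun zeta_blocks :: "nat \<Rightarrow> nat list \<Rightarrow> nat list" where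
  "zeta_blocks N (a # b # r) = [N - b + 1 ..< N - a + 1] @ zeta_blocks N (b # r)"
| "zeta_blocks N _ = []"

lemma zeta_eq_zeta_blocks: "zeta K n = zeta_blocks n (pts K n)"
proof -
  have "concat (map (\<lambda>i. [N - q ! (i + 1) + 1 ..< N - q ! i + 1]) [0..<length q - 1])
      = zeta_blocks N q" for N q
  proof (induction N q rule: zeta_blocks.induct)
    case (1 N a b r)
    have "[0..<length (a # b # r) - 1] = 0 # map Suc [0..<length (b # r) - 1]"
      by (simp add: upt_conv_Cons map_Suc_upt del: upt_Suc)
    then show ?case using 1 by (simp del: upt_Suc add: o_def)
  qed auto
  then show ?thesis unfolding zeta_def .
qed

lemma length_zeta_blocks:
  "sorted_wrt (<) q \<Longrightarrow> q \<noteq> [] \<Longrightarrow> last q \<le> N \<Longrightarrow>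
    length (zeta_blocks N q) = last q - hd q"
proof (induction N q rule: zeta_blocks.induct)
  case (1 N a b r)
  then show ?case using sorted_wrt_hd_le_le_last(2)[of "b # r" b] by auto
qed auto

lemma set_zeta_blocks:
  "sorted_wrt (<) q \<Longrightarrow> q \<noteq> [] \<Longrightarrow> last q \<le> N \<Longrightarrow>
    set (zeta_blocks N q) = {N - last q + 1 ..< N - hd q + 1}"
proof (induction N q rule: zeta_blocks.induct)
  case (1 N a b r)
  then show ?case using sorted_wrt_hd_le_le_last(2)[of "b # r" b] by auto
qed auto

lemma distinct_zeta_blocks:
  assumes "sorted_wrt (<) q" "q \<noteq> []" "last q \<le> N"
  shows "distinct (zeta_blocks N q)"
  using assms
proof (induction N q rule: zeta_blocks.induct)
  case (1 N a b r)
  then show ?case using set_zeta_blocks[of "b # r" N] by auto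
qed auto

lemma zeta_blocks_nth_less_iff:
  assumes "sorted_wrt (<) q" "q \<noteq> []" "last q \<le> N" "i < j" "j < length (zeta_blocks N q)"
  shows "zeta_blocks N q ! j < zeta_blocks N q ! i \<longleftrightarrow>
    (\<exists>c\<in>set q. hd q + i < c \<and> c \<le> hd q + j)"
  using assms
proof (induction N q arbitrary: i j rule: zeta_blocks.induct)
  case (1 N a b r)
  let ?xs = "[N - b + 1 ..< N - a + 1]" and ?ys = "zeta_blocks N (b # r)"
  have sorted: "sorted_wrt (<) (b # r)" and "a < b" and "\<forall>c\<in>set r. b < c"
    using "1.prems"(1) by auto
  moreover have "b \<le> N" using sorted_wrt_hd_le_le_last(2)[OF sorted, of b] "1.prems"(3) by simp
  ultimately have len_xs: "length ?xs = b - a"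
    and below: "\<forall>x\<in>set ?xs. \<forall>y\<in>set ?ys. y < x"
    using set_zeta_blocks[OF sorted] "1.prems"(3) by auto
  have "zeta_blocks N (a # b # r) ! j < zeta_blocks N (a # b # r) ! i \<longleftrightarrow>
      i < b - a \<and> b - a \<le> j \<or> b - a \<le> i \<and> ?ys ! (j - (b - a)) < ?ys ! (i - (b - a))"
    using nth_append_less_iff[OF sorted_wrt_upt below, of i j] "1.prems"(4,5) len_xs
    by (simp del: upt_Suc)
  also have "\<dots> \<longleftrightarrow> (\<exists>c\<in>set (a # b # r). a + i < c \<and> c \<le> a + j)"
  proof (cases "b - a \<le> i")
    case True
    moreover have "j < b - a + length ?ys"
      using "1.prems"(5) len_xs by (simp del: upt_Suc)
    ultimately have "i - (b - a) < j - (b - a)" "j - (b - a) < length ?ys"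
      using "1.prems"(4) by linarith+
    from "1.IH"[OF sorted _ _ this] True "1.prems"(3,4) \<open>a < b\<close>
    have "?ys ! (j - (b - a)) < ?ys ! (i - (b - a)) \<longleftrightarrow>
        (\<exists>c\<in>set (b # r). a + i < c \<and> c \<le> a + j)"
      by (simp add: add.commute)
    with True show ?thesis by auto
  qed (use \<open>a < b\<close> \<open>\<forall>c\<in>set r. b < c\<close> in auto)
  finally show ?case by simp
qed auto

lemma pts_props:
  assumes "K \<subseteq> {1..<n}"
  shows "sorted_wrt (<) (pts K n)" "set (pts K n) = {0} \<union> K \<union> {n}"
    and "pts K n \<noteq> []" "hd (pts K n) = 0" "last (pts K n) = n"
proof -
  have "finite K" using assms finite_subset by blast
  show sorted: "sorted_wrt (<) (pts K n)"
    unfolding pts_def by (rule strict_sorted_list_of_set)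
  show set: "set (pts K n) = {0} \<union> K \<union> {n}"
    unfolding pts_def using \<open>finite K\<close> by (intro set_sorted_list_of_set) simp
  show "pts K n \<noteq> []" using set by auto
  then have "hd (pts K n) \<in> set (pts K n)" "last (pts K n) \<in> set (pts K n)" by simp_all
  moreover have "hd (pts K n) \<le> 0" "n \<le> last (pts K n)"
    using sorted_wrt_hd_le_le_last[OF sorted, of 0] sorted_wrt_hd_le_le_last[OF sorted, of n] set
    by simp_all
  ultimately show "hd (pts K n) = 0" "last (pts K n) = n"
    using set assms by auto
qed

lemma length_zeta: "K \<subseteq> {1..<n} \<Longrightarrow> length (zeta K n) = n"
  using length_zeta_blocks[of "pts K n" n] pts_props(1,3-5)[of K n]
  by (auto simp: zeta_eq_zeta_blocks)

lemma zeta_in_perms: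
  assumes "K \<subseteq> {1..<n}"
  shows "zeta K n \<in> perms n"
  using length_zeta[OF assms] set_zeta_blocks[of "pts K n" n] distinct_zeta_blocks[of "pts K n" n]
    pts_props[OF assms]
  by (auto simp: perms_def zeta_eq_zeta_blocks)

lemma ent_zeta_less_iff:
  assumes "K \<subseteq> {1..<n}" "1 \<le> i" "i < j" "j \<le> n"
  shows "ent (zeta K n) j < ent (zeta K n) i \<longleftrightarrow> (\<exists>c\<in>K. i \<le> c \<and> c < j)"
proof -
  note pts = pts_props[OF assms(1)]
  have "ent (zeta K n) j < ent (zeta K n) i \<longleftrightarrow>
      (\<exists>c\<in>set (pts K n). i - 1 < c \<and> c \<le> j - 1)"
    using zeta_blocks_nth_less_iff[of "pts K n" n "i - 1" "j - 1"] pts(1,3-5) assms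
      length_zeta[OF assms(1)]
    by (simp add: ent_def zeta_eq_zeta_blocks)
  also have "\<dots> \<longleftrightarrow> (\<exists>c\<in>set (pts K n). i \<le> c \<and> c < j)"
    using assms(2,3) by (intro bex_cong) auto
  also have "\<dots> \<longleftrightarrow> (\<exists>c\<in>K. i \<le> c \<and> c < j)"
    using pts(2) assms(2,4) by auto
  finally show ?thesis .
qed

lemma Inv_zeta:
  assumes "K \<subseteq> {1..<n}"
  shows "Inv (zeta K n) = {(i, j). 1 \<le> i \<and> i < j \<and> j \<le> n \<and> (\<exists>c\<in>K. i \<le> c \<and> c < j)}"
  using ent_zeta_less_iff[OF assms] length_zeta[OF assms] by (auto simp: Inv_def)

lemma GDes_zeta:
  assumes "K \<subseteq> {1..<n}"
  shows "GDes (zeta K n) = K"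
proof
  show "GDes (zeta K n) \<subseteq> K"
  proof
    fix p assume "p \<in> GDes (zeta K n)"
    then have "1 \<le> p" "p < n" "ent (zeta K n) (p + 1) < ent (zeta K n) p"
      by (auto simp: GDes_def length_zeta[OF assms])
    then obtain c where "c \<in> K" "p \<le> c" "c < p + 1"
      using ent_zeta_less_iff[OF assms, of p "p + 1"] by auto
    moreover from \<open>p \<le> c\<close> \<open>c < p + 1\<close> have "c = p" by simp
    ultimately show "p \<in> K" by simp
  qed
  show "K \<subseteq> GDes (zeta K n)"
    using ent_zeta_less_iff[OF assms] assms by (auto simp: GDes_def length_zeta[OF assms])
qed

lemma ent_le_if_no_Des:
  assumes "i \<le> j" "j \<le> length v" "1 \<le> i" "\<And>m. i \<le> m \<Longrightarrow> m < j \<Longrightarrow> m \<notin> Des v"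
  shows "ent v i \<le> ent v j"
  using assms
proof (induction j rule: dec_induct)
  case (step m)
  then have "m \<notin> Des v" "1 \<le> m" "m < length v" by simp_all
  then have "ent v m \<le> ent v (m + 1)" by (auto simp: Des_def)
  with step show ?case by simp
qed simp

lemma Des_subset_iff_weak_le_zeta:
  assumes "v \<in> perms n" "K \<subseteq> {1..<n}"
  shows "Des v \<subseteq> K \<longleftrightarrow> weak_le v (zeta K n)"
proof
  have len: "length v = n" using assms(1) by (simp add: perms_def)
  assume "Des v \<subseteq> K"
  show "weak_le v (zeta K n)"
    unfolding weak_le_def Inv_zeta[OF assms(2)]
  proof
    fix x assume "x \<in> Inv v"
    then obtain i j where x: "x = (i, j)" and ij: "1 \<le> i" "i < j" "j \<le> n" "ent v j < ent v i"
      by (auto simp: Inv_def len)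
    have "\<exists>c\<in>K. i \<le> c \<and> c < j"
    proof (rule ccontr)
      assume "\<not> (\<exists>c\<in>K. i \<le> c \<and> c < j)"
      with \<open>Des v \<subseteq> K\<close> have "ent v i \<le> ent v j"
        using ij len by (intro ent_le_if_no_Des) auto
      with ij(4) show False by simp
    qed
    with x ij show "x \<in> {(i, j). 1 \<le> i \<and> i < j \<and> j \<le> n \<and> (\<exists>c\<in>K. i \<le> c \<and> c < j)}"
      by simp
  qed
next
  assume "weak_le v (zeta K n)"
  show "Des v \<subseteq> K"
  proof
    fix p assume "p \<in> Des v"
    then have "(p, p + 1) \<in> Inv v" by (auto simp: Des_def Inv_def)
    with \<open>weak_le v (zeta K n)\<close> obtain c where "c \<in> K" "p \<le> c" "c < p + 1"
      by (auto simp: weak_le_def Inv_zeta[OF assms(2)])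
    moreover from \<open>p \<le> c\<close> \<open>c < p + 1\<close> have "c = p" by simp
    ultimately show "p \<in> K" by simp
  qed
qed

lemma finite_perms: "finite (perms n)"
proof (rule finite_subset)
  show "perms n \<subseteq> {xs. set xs \<subseteq> {1..n} \<and> length xs = n}" by (auto simp: perms_def)
qed (rule finite_lists_length_eq, simp)

lemma perms_nth_eq_card:
  assumes "u \<in> perms n" "i < n"
  shows "u ! i = Suc (card {j. j < n \<and> u ! j < u ! i})"
proof -
  have len: "length u = n" and "distinct u" and set: "set u = {1..n}"
    using assms(1) by (auto simp: perms_def)
  then have inj: "inj_on (nth u) {j. j < n \<and> u ! j < u ! i}"
    by (auto simp: inj_on_def nth_eq_iff_index_eq)
  have image: "nth u ` {j. j < n \<and> u ! j < u ! i} = {1..<u ! i}"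
  proof
    show "nth u ` {j. j < n \<and> u ! j < u ! i} \<subseteq> {1..<u ! i}"
      using set len nth_mem by fastforce
    have "u ! i \<le> n" using set len assms(2) nth_mem by fastforce
    show "{1..<u ! i} \<subseteq> nth u ` {j. j < n \<and> u ! j < u ! i}"
    proof
      fix x assume x: "x \<in> {1..<u ! i}"
      with \<open>u ! i \<le> n\<close> have "x \<in> set u" using set by auto
      then obtain j where "j < n" "u ! j = x" using len by (auto simp: in_set_conv_nth)
      with x show "x \<in> nth u ` {j. j < n \<and> u ! j < u ! i}" by auto
    qed
  qed
  have "card {j. j < n \<and> u ! j < u ! i} = card {1..<u ! i}"
    using card_image[OF inj] image by simp
  moreover have "1 \<le> u ! i" using set len assms(2) nth_mem by fastforce
  ultimately show ?thesis by simp
qed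

lemma perms_nth_less_iff_Inv:
  assumes "u \<in> perms n" "i < n" "j < n" "i \<noteq> j"
  shows "u ! j < u ! i \<longleftrightarrow> (if j < i then (j + 1, i + 1) \<notin> Inv u else (i + 1, j + 1) \<in> Inv u)"
proof -
  have "length u = n" "distinct u" using assms(1) by (auto simp: perms_def)
  then have "u ! i \<noteq> u ! j" using assms(2-4) by (simp add: nth_eq_iff_index_eq)
  with assms \<open>length u = n\<close> show ?thesis by (auto simp: Inv_def ent_def)
qed

lemma inj_on_Inv_perms: "inj_on Inv (perms n)"
proof (rule inj_onI)
  fix u v assume u: "u \<in> perms n" and v: "v \<in> perms n" and "Inv u = Inv v"
  show "u = v"
  proof (rule nth_equalityI)
    show "length u = length v" using u v by (simp add: perms_def)
    fix i assume "i < length u"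
    then have i: "i < n" using u by (simp add: perms_def)
    have "{j. j < n \<and> u ! j < u ! i} = {j. j < n \<and> v ! j < v ! i}"
      using perms_nth_less_iff_Inv[OF u i] perms_nth_less_iff_Inv[OF v i] \<open>Inv u = Inv v\<close>
      by (metis (no_types, lifting) less_irrefl)
    then show "u ! i = v ! i"
      using perms_nth_eq_card[OF u i] perms_nth_eq_card[OF v i] by simp
  qed
qed

declare mob.simps [simp del]

lemma sum_mob_interval:
  assumes "u \<in> perms n" "v \<in> perms n" "weak_le u v"
  shows "(\<Sum>w \<in> {w \<in> perms n. weak_le u w \<and> weak_le w v}. mob u w) = (if u = v then 1 else 0)"
proof (cases "u = v")
  case True
  with assms inj_on_Inv_perms[of n] have "{w \<in> perms n. weak_le u w \<and> weak_le w v} = {u}"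
    by (auto simp: weak_le_def inj_on_def)
  with True show ?thesis by (simp add: mob.simps)
next
  case False
  let ?below = "{w \<in> perms n. Inv u \<subseteq> Inv w \<and> Inv w \<subset> Inv v}"
  have "length v = n" using assms(2) by (simp add: perms_def)
  moreover have "Inv u \<subset> Inv v"
    using False assms inj_on_Inv_perms[of n] by (auto simp: weak_le_def inj_on_def)
  ultimately have mob_v: "mob u v = - (\<Sum>w \<in> ?below. mob u w)"
    using False by (simp add: mob.simps)
  have "{w \<in> perms n. weak_le u w \<and> weak_le w v} = insert v ?below"
    using assms inj_on_Inv_perms[of n] by (auto simp: weak_le_def inj_on_def)
  moreover have "finite ?below" using finite_perms by simp
  ultimately show ?thesis using False mob_v by simp
qed

lemma sum_mob_Des_subset:
  assumes "u \<in> perms n" "K \<subseteq> {1..<n}"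
  shows "(\<Sum>v \<in> {v \<in> perms n. weak_le u v}. if Des v \<subseteq> K then mob u v else 0)
       = (if u = zeta K n then 1 else 0)"
proof -
  have "(\<Sum>v \<in> {v \<in> perms n. weak_le u v}. if Des v \<subseteq> K then mob u v else 0)
      = (\<Sum>v \<in> {v \<in> perms n. weak_le u v \<and> weak_le v (zeta K n)}. mob u v)"
  proof -
    have "{v \<in> {v \<in> perms n. weak_le u v}. Des v \<subseteq> K}
        = {v \<in> perms n. weak_le u v \<and> weak_le v (zeta K n)}"
      using Des_subset_iff_weak_le_zeta[OF _ assms(2)] by blast
    then show ?thesis using finite_perms by (simp flip: sum.inter_filter)
  qed
  also have "\<dots> = (if u = zeta K n then 1 else 0)"
  proof (cases "weak_le u (zeta K n)")
    case True
    then show ?thesis using sum_mob_interval[OF assms(1) zeta_in_perms[OF assms(2)]] by simp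
  next
    case False
    then have no_v: "{v \<in> perms n. weak_le u v \<and> weak_le v (zeta K n)} = {}"
      by (auto simp: weak_le_def)
    from False have "u \<noteq> zeta K n" by (auto simp: weak_le_def)
    then show ?thesis unfolding no_v by simp
  qed
  finally show ?thesis .
qed

lemma Fq_eq_sum_Pow: "Fq J n e = (\<Sum>K \<in> Pow {1..<n}. if J \<subseteq> K then Mq K n e else 0)"
proof -
  have "{K. K \<subseteq> {1..<n} \<and> J \<subseteq> K} = {K \<in> Pow {1..<n}. J \<subseteq> K}" by auto
  then show ?thesis unfolding Fq_def by (simp only:) (rule sum.inter_filter, simp)
qed

lemma D_M_eq_sum_Mq:
  "D_M n u e = (\<Sum>K \<in> Pow {1..<n}.
      Mq K n e * (\<Sum>v \<in> {v \<in> perms n. weak_le u v}. if Des v \<subseteq> K then mob u v else 0))"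
proof -
  let ?V = "{v \<in> perms n. weak_le u v}" and ?P = "Pow {1..<n}"
  have "D_M n u e = (\<Sum>v \<in> ?V. \<Sum>K \<in> ?P. if Des v \<subseteq> K then mob u v * Mq K n e else 0)"
    unfolding D_M_def Fq_eq_sum_Pow sum_distrib_left by (intro sum.cong refl) simp
  also have "\<dots> = (\<Sum>K \<in> ?P. \<Sum>v \<in> ?V. if Des v \<subseteq> K then mob u v * Mq K n e else 0)"
    by (rule sum.swap)
  also have "\<dots> = (\<Sum>K \<in> ?P. Mq K n e * (\<Sum>v \<in> ?V. if Des v \<subseteq> K then mob u v else 0))"
    unfolding sum_distrib_left by (intro sum.cong refl) (simp add: mult.commute)
  finally show ?thesis .
qed

lemma sum_Pow_if_eq_zeta:
  "(\<Sum>K \<in> Pow {1..<n}. if u = zeta K n then f K else 0) = (if closed n u then f (GDes u) else 0)"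
proof -
  have "{K \<in> Pow {1..<n}. u = zeta K n} = (if closed n u then {GDes u} else {})"
    using GDes_zeta by (auto simp: closed_def)
  then show ?thesis by (simp add: sum.inter_filter[symmetric])
qed

theorem mainTheorem13:
  fixes n :: nat and u :: "nat list"
  assumes "n \<ge> 1" and "u \<in> perms n"
  shows "D_M n u = (if closed n u then Mq (GDes u) n else (\<lambda>_. 0))"
proof
  fix e
  have "D_M n u e = (\<Sum>K \<in> Pow {1..<n}. Mq K n e * (if u = zeta K n then 1 else 0))"
    using sum_mob_Des_subset[OF assms(2)] by (simp add: D_M_eq_sum_Mq)
  also have "\<dots> = (if closed n u then Mq (GDes u) n e else 0)"
    using sum_Pow_if_eq_zeta[of u n "\<lambda>K. Mq K n e"] by (simp add: if_distrib cong: if_cong)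
  finally show "D_M n u e = (if closed n u then Mq (GDes u) n else (\<lambda>_. 0)) e" by simp
qed

end
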